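(* Let $N$ be an oriented subnetwork of $\Gamma(T)$. Let ${\bf t}_i,{\bf t}_{i'},{\bf t}_j,{\bf t}_{j'}\in T$ with ${\bf t}_{i'}=(a,c)$, ${\bf t}_i=(b,d)$, ${\bf t}_{j'}=(e,g)$, ${\bf t}_j=(f,h)$, where $a<b$, $c<d$, $e<f$, $g<h$, so that $R_{i,i'}=[a,b]\times[c,d]$ and $R_{j,j'}=[e,f]\times[g,h]$ both have positive slope. Assume the two rectangles form a crossing configuration in the sense that $[a,b]\subseteq[e,f]$ and $[g,h]\subseteq[c,d]$. Suppose $N$ contains directed Manhattan paths from ${\bf t}_i$ to ${\bf t}_{i'}$, from ${\bf t}_{i'}$ to ${\bf t}_i$, from ${\bf t}_j$ to ${\bf t}_{j'}$ and from ${\bf t}_{j'}$ to ${\bf t}_j$. Then $N$ contains directed Manhattan paths from ${\bf t}_i$ to ${\bf t}_{j'}$, from ${\bf t}_{j'}$ to ${\bf t}_i$, from ${\bf t}_j$ to ${\bf t}_{i'}$ and from ${\bf t}_{i'}$ to ${\bf t}_j$. (The mirror-image statement, obtained by reflecting the plane in a vertical line, holds for rectangles of negative slope.)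
   Context: $T$ is a finite set of points (terminals) in the plane, no two on a common horizontal or vertical line. For points $p,q$, $R(p,q)$ is the smallest closed axis-parallel rectangle containing $p$ and $q$; for ${\bf t}_i,{\bf t}_j\in T$, $R_{i,j}=R({\bf t}_i,{\bf t}_j)$. $\Gamma(T)$ is the grid formed by the horizontal and vertical lines through the terminals, restricted to the bounding box of $T$: its vertices are the intersection points of these lines and its edges are the segments between consecutive vertices on a line. An oriented subnetwork of $\Gamma(T)$ is a set of edges of $\Gamma(T)$, each directed in exactly one sense. A directed Manhattan path from $p$ to $q$ is a directed path in the network whose length equals $|p^x-q^x|+|p^y-q^y|$. A rectangle $R_{i,j}$ has positive slope if $({\bf t}_i^x-{\bf t}_j^x)({\bf t}_i^y-{\bf t}_j^y)>0$ and negative slope otherwise. *)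

theory Defs
  imports Main "HOL-Library.Library"
begin

type_synonym pt = "real \<times> real"

definition general_position :: "pt set \<Rightarrow> bool" where
  "general_position T \<longleftrightarrow>
     (\<forall>p\<in>T. \<forall>q\<in>T. p \<noteq> q \<longrightarrow> fst p \<noteq> fst q \<and> snd p \<noteq> snd q)"

text \<open>Vertices of the grid Gamma(T): intersections of the vertical lines through
  terminals with the horizontal lines through terminals (these automatically lie
  in the bounding box of T).\<close>
definition grid_vertices :: "pt set \<Rightarrow> pt set" where
  "grid_vertices T = {(x, y). x \<in> fst ` T \<and> y \<in> snd ` T}"

definition grid_edge :: "pt set \<Rightarrow> pt \<Rightarrow> pt \<Rightarrow> bool" where
  "grid_edge T u v \<longleftrightarrow>
     u \<in> grid_vertices T \<and> v \<in> grid_vertices T \<and> u \<noteq> v \<and>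
     ((fst u = fst v \<and> \<not> (\<exists>y\<in>snd ` T. min (snd u) (snd v) < y \<and> y < max (snd u) (snd v))) \<or>
      (snd u = snd v \<and> \<not> (\<exists>x\<in>fst ` T. min (fst u) (fst v) < x \<and> x < max (fst u) (fst v))))"

definition oriented_subnetwork :: "pt set \<Rightarrow> (pt \<times> pt) set \<Rightarrow> bool" where
  "oriented_subnetwork T N \<longleftrightarrow>
     (\<forall>(u, v)\<in>N. grid_edge T u v) \<and> (\<forall>u v. (u, v) \<in> N \<longrightarrow> (v, u) \<notin> N)"

definition dist1 :: "pt \<Rightarrow> pt \<Rightarrow> real" where
  "dist1 p q = \<bar>fst p - fst q\<bar> + \<bar>snd p - snd q\<bar>"

text \<open>Length of a polygonal path given by its vertex list (grid edges are
  axis-parallel, so Euclidean length equals dist1).\<close>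
definition path_length :: "pt list \<Rightarrow> real" where
  "path_length vs = sum_list (map (\<lambda>(u, v). dist1 u v) (zip vs (tl vs)))"

definition directed_path :: "(pt \<times> pt) set \<Rightarrow> pt list \<Rightarrow> pt \<Rightarrow> pt \<Rightarrow> bool" where
  "directed_path N vs p q \<longleftrightarrow>
     vs \<noteq> [] \<and> hd vs = p \<and> last vs = q \<and>
     (\<forall>i. Suc i < length vs \<longrightarrow> (vs ! i, vs ! Suc i) \<in> N)"

definition manhattan_path :: "(pt \<times> pt) set \<Rightarrow> pt \<Rightarrow> pt \<Rightarrow> bool" where
  "manhattan_path N p q \<longleftrightarrow>
     (\<exists>vs. directed_path N vs p q \<and> path_length vs = dist1 p q)"

end

theory Submission
  imports Defs "HOL-Library.Product_Order"
begin

(* Points are ordered componentwise (HOL-Library.Product_Order), so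
   q \<le> p means that q lies weakly south-west of p.  A path is Manhattan exactly
   when its length equals the l1-distance of its ends; if the end q lies south-west
   of the start p, this forces every step to go down or left, i.e. the vertex list
   is descending.  Conversely every descending vertex list is a Manhattan path.

   Crossing argument: the descending staircase Q from t_j=(f,h) to t_j'=(e,g) starts
   on or to the right of the descending staircase P from t_i=(b,d) to t_i'=(a,c), ends
   strictly to its left, and stays in the horizontal strip spanned by P.  A single
   grid step can not jump over P, so Q meets P in a common vertex z.  Splicing P up
   to z with Q after z (and vice versa) gives descending, hence Manhattan, paths
   t_i \<leadsto> t_j' and t_j \<leadsto> t_i'.

   The reverse paths t_i' \<leadsto> t_i and t_j' \<leadsto> t_j are descending paths in the
   converse network, which is again an oriented subnetwork; applying the same
   argument to it yields the remaining two paths of the theorem. *)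

lemma path_length_single [simp]: "path_length [u] = 0"
  by (simp add: path_length_def)

lemma path_length_Cons2 [simp]: "path_length (u # v # vs) = dist1 u v + path_length (v # vs)"
  by (simp add: path_length_def)

lemma dist1_commute: "dist1 p q = dist1 q p"
  by (simp add: dist1_def abs_minus_commute)

lemma path_length_snoc:
  "vs \<noteq> [] \<Longrightarrow> path_length (vs @ [w]) = path_length vs + dist1 (last vs) w"
  by (induction vs rule: induct_list012) auto

lemma path_length_rev [simp]: "path_length (rev vs) = path_length vs"
proof (induction vs rule: induct_list012)
  case (3 u v vs)
  have "path_length (rev (u # v # vs)) = path_length (rev (v # vs)) + dist1 v u"
    using path_length_snoc[of "rev (v # vs)" u] by (simp add: last_rev)
  then show ?case using "3.IH"(2) by (simp add: dist1_commute)
qed simp_all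

lemma dist1_le_path_length: "vs \<noteq> [] \<Longrightarrow> dist1 (hd vs) (last vs) \<le> path_length vs"
proof (induction vs rule: induct_list012)
  case (3 u v vs)
  then show ?case by (simp add: dist1_def)
qed (simp_all add: dist1_def)

section \<open>Descending paths\<close>

lemma tight_path_descending:
  "vs \<noteq> [] \<Longrightarrow> last vs \<le> hd vs \<Longrightarrow> path_length vs = dist1 (hd vs) (last vs)
   \<Longrightarrow> successively (\<ge>) vs"
proof (induction vs rule: induct_list012)
  case (3 u v vs)
  define w where "w = last (v # vs)"
  have tight: "dist1 u v + path_length (v # vs) = dist1 u w"
    using "3.prems"(3) by (simp add: w_def)
  have w_le_u: "w \<le> u"
    using "3.prems"(2) by (simp add: w_def)
  have rest: "dist1 v w \<le> path_length (v # vs)"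
    using dist1_le_path_length[of "v # vs"] by (simp add: w_def)
  have "v \<le> u \<and> w \<le> v \<and> path_length (v # vs) = dist1 v w"
    using tight w_le_u rest unfolding less_eq_prod_def dist1_def by arith
  then show ?case using "3.IH"(2) by (simp add: w_def)
qed simp_all

lemma descending_path_tight:
  "vs \<noteq> [] \<Longrightarrow> successively (\<ge>) vs
   \<Longrightarrow> path_length vs = dist1 (hd vs) (last vs) \<and> last vs \<le> hd vs"
proof (induction vs rule: induct_list012)
  case (3 u v vs)
  then show ?case by (auto simp: dist1_def less_eq_prod_def)
qed (simp_all add: dist1_def)

lemma descending_sorted: "successively (\<ge>) vs \<Longrightarrow> sorted_wrt (\<ge>) (vs :: pt list)"
  by (rule successively_conv_sorted_wrt[THEN iffD1]) (auto intro: transpI order_trans)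

lemma descending_between:
  assumes "successively (\<ge>) vs" and "p \<in> set vs"
  shows "last vs \<le> p \<and> p \<le> hd (vs :: pt list)"
proof -
  have sorted: "sorted_wrt (\<ge>) vs" using assms(1) by (rule descending_sorted)
  obtain i where i: "i < length vs" "p = vs ! i" using assms(2) by (auto simp: in_set_conv_nth)
  have "vs ! i \<le> vs ! 0"
    using sorted_wrt_nth_less[OF sorted, of 0 i] i by (cases "i = 0") auto
  moreover have "vs ! (length vs - 1) \<le> vs ! i"
    using sorted_wrt_nth_less[OF sorted, of i "length vs - 1"] i by (cases "i = length vs - 1") auto
  moreover have "vs \<noteq> []" using assms(2) by auto
  ultimately show ?thesis using i by (simp add: hd_conv_nth last_conv_nth)
qed

lemma descending_comparable:
  assumes "successively (\<ge>) vs" and "p \<in> set vs" and "q \<in> set vs"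
  shows "p \<le> q \<or> q \<le> (p :: pt)"
proof -
  have sorted: "sorted_wrt (\<ge>) vs" using assms(1) by (rule descending_sorted)
  obtain i j where "i < length vs" "p = vs ! i" "j < length vs" "q = vs ! j"
    using assms(2,3) by (auto simp: in_set_conv_nth)
  then show ?thesis using sorted_wrt_nth_less[OF sorted]
    by (cases i j rule: linorder_cases) auto
qed

section \<open>Directed paths and the converse network\<close>

lemma directed_path_iff:
  "directed_path N vs p q \<longleftrightarrow>
     vs \<noteq> [] \<and> hd vs = p \<and> last vs = q \<and> successively (\<lambda>u v. (u, v) \<in> N) vs"
  by (auto simp: directed_path_def successively_conv_nth)

lemma manhattan_path_converse_imp:
  "manhattan_path N p q \<Longrightarrow> manhattan_path (converse N) q p"
proof -
  assume "manhattan_path N p q"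
  then obtain vs where "directed_path N vs p q" and "path_length vs = dist1 p q"
    by (auto simp: manhattan_path_def)
  then have "directed_path (converse N) (rev vs) q p \<and> path_length (rev vs) = dist1 q p"
    by (simp add: directed_path_iff hd_rev last_rev dist1_commute)
  then show ?thesis by (auto simp: manhattan_path_def)
qed

lemma manhattan_path_converse:
  "manhattan_path (converse N) q p \<longleftrightarrow> manhattan_path N p q"
  using manhattan_path_converse_imp[of N p q] manhattan_path_converse_imp[of "converse N" q p]
  by auto

lemma grid_edge_sym: "grid_edge T u v \<Longrightarrow> grid_edge T v u"
  by (auto simp: grid_edge_def min.commute max.commute)

lemma oriented_subnetwork_converse:
  assumes "oriented_subnetwork T N"
  shows "oriented_subnetwork T (converse N)"
proof -
  have "grid_edge T u v" if "(v, u) \<in> N" for u v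
  proof -
    have "grid_edge T v u" using assms that by (auto simp: oriented_subnetwork_def)
    then show ?thesis by (rule grid_edge_sym)
  qed
  then show ?thesis using assms by (auto simp: oriented_subnetwork_def)
qed

lemma directed_path_grid_vertices:
  assumes N: "oriented_subnetwork T N" and path: "directed_path N vs p q" and p: "p \<in> T"
    and v: "v \<in> set vs"
  shows "v \<in> grid_vertices T"
proof -
  obtain i where i: "i < length vs" "v = vs ! i" using v by (auto simp: in_set_conv_nth)
  show ?thesis
  proof (cases i)
    case 0
    then have "v = p" using i path by (simp add: directed_path_def hd_conv_nth)
    then show ?thesis using p by (auto simp: grid_vertices_def mem_Times_iff)
  next
    case (Suc j)
    then have "(vs ! j, v) \<in> N" using path i by (simp add: directed_path_def)
    then show ?thesis using N by (auto simp: oriented_subnetwork_def grid_edge_def)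
  qed
qed

section \<open>Descending grid steps\<close>

definition grid_step :: "real set \<Rightarrow> real set \<Rightarrow> pt \<Rightarrow> pt \<Rightarrow> bool" where
  "grid_step X Y u v \<longleftrightarrow>
    (fst v = fst u \<and> snd v < snd u \<and> \<not> (\<exists>y\<in>Y. snd v < y \<and> y < snd u)) \<or>
    (snd v = snd u \<and> fst v < fst u \<and> \<not> (\<exists>x\<in>X. fst v < x \<and> x < fst u))"

lemma grid_step_le: "grid_step X Y u v \<Longrightarrow> v \<le> u"
  by (auto simp: grid_step_def less_eq_prod_def)

lemma grid_edge_grid_step: "grid_edge T u v \<Longrightarrow> v \<le> u \<Longrightarrow> grid_step (fst ` T) (snd ` T) u v"
  by (auto simp: grid_edge_def grid_step_def less_eq_prod_def prod_eq_iff min_def max_def)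

lemma grid_chain_meets_height:
  "successively (grid_step X Y) P \<Longrightarrow> P \<noteq> [] \<Longrightarrow> y \<in> Y
   \<Longrightarrow> snd (last P) \<le> y \<Longrightarrow> y \<le> snd (hd P) \<Longrightarrow> \<exists>p\<in>set P. snd p = y"
proof (induction P rule: induct_list012)
  case (3 u v vs)
  show ?case
  proof (cases "y = snd u")
    case False
    then have "y < snd u" using "3.prems"(5) by simp
    moreover have "grid_step X Y u v" using "3.prems"(1) by simp
    ultimately have "y \<le> snd v" using "3.prems"(3) by (auto simp: grid_step_def)
    then show ?thesis using "3.IH"(2) "3.prems" by auto
  qed simp
qed auto

definition right_of :: "pt list \<Rightarrow> pt \<Rightarrow> bool" where
  "right_of P q \<longleftrightarrow> (\<exists>p\<in>set P. snd p = snd q \<and> fst p < fst q)"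

lemma grid_step_stays_right:
  assumes P: "successively (grid_step X Y) P" and P_X: "\<forall>p\<in>set P. fst p \<in> X" and "P \<noteq> []"
    and right: "right_of P q" and step: "grid_step X Y q q'" and "snd q' \<in> Y"
    and "snd (last P) \<le> snd q'" and "snd q' \<le> snd (hd P)"
  shows "q' \<in> set P \<or> right_of P q'"
proof -
  obtain p where p: "p \<in> set P" "snd p = snd q" "fst p < fst q"
    using right by (auto simp: right_of_def)
  from step show ?thesis unfolding grid_step_def
  proof
    assume down: "fst q' = fst q \<and> snd q' < snd q \<and> \<not> (\<exists>y\<in>Y. snd q' < y \<and> y < snd q)"
    obtain p' where p': "p' \<in> set P" "snd p' = snd q'"
      using grid_chain_meets_height[OF P] assms by blast
    have "p \<le> p' \<or> p' \<le> p"
      using descending_comparable[OF successively_mono[OF P grid_step_le] p(1) p'(1)] .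
    then have "fst p' \<le> fst p" using p p' down by (auto simp: less_eq_prod_def)
    then show ?thesis using p p' down by (auto simp: right_of_def)
  next
    assume left: "snd q' = snd q \<and> fst q' < fst q \<and> \<not> (\<exists>x\<in>X. fst q' < x \<and> x < fst q)"
    have "fst p \<le> fst q'" using P_X p left by force
    show ?thesis
    proof (cases "fst p = fst q'")
      case True
      then have "q' = p" using p left by (simp add: prod_eq_iff)
      then show ?thesis using p by simp
    next
      case False
      then show ?thesis using p left \<open>fst p \<le> fst q'\<close> by (auto simp: right_of_def)
    qed
  qed
qed

text \<open>Discrete intermediate value theorem: a descending grid chain Q running from
  on-or-right of P to a point not right of P, within the height range of P, meets P.\<close>
lemma grid_chain_crosses:
  assumes P: "successively (grid_step X Y) P" and P_X: "\<forall>p\<in>set P. fst p \<in> X" and "P \<noteq> []"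
  shows "successively (grid_step X Y) Q \<Longrightarrow> Q \<noteq> [] \<Longrightarrow> hd Q \<in> set P \<or> right_of P (hd Q)
    \<Longrightarrow> \<not> right_of P (last Q)
    \<Longrightarrow> \<forall>q\<in>set Q. snd q \<in> Y \<and> snd (last P) \<le> snd q \<and> snd q \<le> snd (hd P)
    \<Longrightarrow> \<exists>z\<in>set Q. z \<in> set P"
proof (induction Q rule: induct_list012)
  case (3 u v vs)
  show ?case
  proof (cases "u \<in> set P")
    case False
    then have "right_of P u" using "3.prems"(3) by simp
    then have "v \<in> set P \<or> right_of P v"
      using grid_step_stays_right[OF P P_X \<open>P \<noteq> []\<close>] "3.prems"(1,5) by simp
    then show ?thesis using "3.IH"(2) "3.prems" by auto
  qed simp
qed auto

lemma staircases_meet: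
  assumes P: "successively (grid_step X Y) P" and Q: "successively (grid_step X Y) Q"
    and "P \<noteq> []" and "Q \<noteq> []"
    and hd_P: "hd P = (b, d)" and last_P: "last P = (a, c)"
    and hd_Q: "hd Q = (f, h)" and last_Q: "last Q = (e, g)"
    and P_X: "\<forall>p\<in>set P. fst p \<in> X" and Q_Y: "\<forall>q\<in>set Q. snd q \<in> Y"
    and "e \<le> a" "b \<le> f" "c \<le> g" "h \<le> d"
  shows "\<exists>z. z \<in> set P \<and> z \<in> set Q"
proof -
  have P_box: "\<forall>p\<in>set P. a \<le> fst p \<and> fst p \<le> b \<and> c \<le> snd p \<and> snd p \<le> d"
    using descending_between[OF successively_mono[OF P grid_step_le]] hd_P last_P
    by (auto simp: less_eq_prod_def)
  have Q_box: "\<forall>q\<in>set Q. e \<le> fst q \<and> fst q \<le> f \<and> g \<le> snd q \<and> snd q \<le> h"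
    using descending_between[OF successively_mono[OF Q grid_step_le]] hd_Q last_Q
    by (auto simp: less_eq_prod_def)
  have hd_Q_in: "hd Q \<in> set Q" using \<open>Q \<noteq> []\<close> by simp
  obtain p where p: "p \<in> set P" "snd p = h"
    using grid_chain_meets_height[OF P \<open>P \<noteq> []\<close>, of h] Q_Y Q_box hd_Q_in hd_Q hd_P last_P assms
    by force
  have start: "hd Q \<in> set P \<or> right_of P (hd Q)"
  proof (cases "fst p < f")
    case True
    then show ?thesis using p hd_Q by (auto simp: right_of_def)
  next
    case False
    then have "p = hd Q" using p P_box hd_Q assms by (auto simp: prod_eq_iff)
    then show ?thesis using p by simp
  qed
  have finish: "\<not> right_of P (last Q)"
    using P_box last_Q assms by (auto simp: right_of_def)
  have "\<forall>q\<in>set Q. snd q \<in> Y \<and> snd (last P) \<le> snd q \<and> snd q \<le> snd (hd P)"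
    using Q_Y Q_box hd_P last_P assms by force
  then show ?thesis using grid_chain_crosses[OF P P_X \<open>P \<noteq> []\<close> Q \<open>Q \<noteq> []\<close> start finish] by blast
qed

lemma manhattan_path_staircase:
  assumes N: "oriented_subnetwork T N" and mp: "manhattan_path N p q" and p: "p \<in> T"
    and q_le_p: "q \<le> p"
  obtains vs where "directed_path N vs p q" and "successively (\<ge>) vs"
    and "successively (grid_step (fst ` T) (snd ` T)) vs"
    and "\<forall>v\<in>set vs. fst v \<in> fst ` T \<and> snd v \<in> snd ` T"
proof -
  obtain vs where path: "directed_path N vs p q" and len: "path_length vs = dist1 p q"
    using mp by (auto simp: manhattan_path_def)
  have desc: "successively (\<ge>) vs"
    using tight_path_descending[of vs] path len q_le_p by (simp add: directed_path_iff)
  have "successively (\<lambda>u v. (u, v) \<in> N \<and> v \<le> u) vs"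
    using path desc by (auto simp: directed_path_iff successively_conv_nth)
  then have "successively (grid_step (fst ` T) (snd ` T)) vs"
    by (rule successively_mono) (use N grid_edge_grid_step in \<open>auto simp: oriented_subnetwork_def\<close>)
  moreover have "\<forall>v\<in>set vs. fst v \<in> fst ` T \<and> snd v \<in> snd ` T"
    using directed_path_grid_vertices[OF N path p] by (force simp: grid_vertices_def)
  ultimately show ?thesis using that path desc by blast
qed

lemma splice_descending_paths:
  assumes P: "directed_path N P p r" "successively (\<ge>) P"
    and Q: "directed_path N Q s q" "successively (\<ge>) Q"
    and z: "z \<in> set P" "z \<in> set Q"
  shows "manhattan_path N p q"
proof -
  obtain A B where A: "P = A @ z # B" using z(1) by (meson split_list)
  obtain C D where D: "Q = C @ z # D" using z(2) by (meson split_list)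
  define L where "L = A @ z # D"
  have "successively (\<lambda>u v. (u, v) \<in> N) L" and desc: "successively (\<ge>) L"
    using P Q unfolding A D L_def by (auto simp: directed_path_iff successively_append_iff)
  moreover have "hd L = p" and "last L = q"
    using P(1) Q(1) unfolding A D L_def by (cases A; cases D; simp add: directed_path_iff)+
  ultimately have "directed_path N L p q" and "path_length L = dist1 p q"
    using descending_path_tight[OF _ desc] by (auto simp: directed_path_iff L_def)
  then show ?thesis by (auto simp: manhattan_path_def)
qed

lemma crossing_descending_paths:
  fixes ti ti' tj tj' :: pt and a b c d e f g h :: real
  assumes N: "oriented_subnetwork T N"
    and "ti \<in> T" "tj \<in> T"
    and "ti' = (a, c)" "ti = (b, d)" "tj' = (e, g)" "tj = (f, h)"
    and "a \<le> b" "c \<le> d" "g \<le> h"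
    and "e \<le> a" "b \<le> f" "c \<le> g" "h \<le> d"
    and "manhattan_path N ti ti'" "manhattan_path N tj tj'"
  shows "manhattan_path N ti tj' \<and> manhattan_path N tj ti'"
proof -
  obtain P where P: "directed_path N P ti ti'" "successively (\<ge>) P"
      "successively (grid_step (fst ` T) (snd ` T)) P" "\<forall>v\<in>set P. fst v \<in> fst ` T \<and> snd v \<in> snd ` T"
    using manhattan_path_staircase[OF N \<open>manhattan_path N ti ti'\<close> \<open>ti \<in> T\<close>] assms
    by (auto simp: less_eq_prod_def)
  obtain Q where Q: "directed_path N Q tj tj'" "successively (\<ge>) Q"
      "successively (grid_step (fst ` T) (snd ` T)) Q" "\<forall>v\<in>set Q. fst v \<in> fst ` T \<and> snd v \<in> snd ` T"
    using manhattan_path_staircase[OF N \<open>manhattan_path N tj tj'\<close> \<open>tj \<in> T\<close>] assms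
    by (auto simp: less_eq_prod_def)
  obtain z where z: "z \<in> set P" "z \<in> set Q"
    using staircases_meet[OF P(3) Q(3), of b d a c f h e g] P Q assms
    by (auto simp: directed_path_iff)
  show ?thesis
    using splice_descending_paths[OF P(1,2) Q(1,2) z]
      splice_descending_paths[OF Q(1,2) P(1,2) z(2,1)] by blast
qed

theorem lemma3p1:
  fixes T :: "pt set" and N :: "(pt \<times> pt) set"
    and ti ti' tj tj' :: pt and a b c d e f g h :: real
  assumes "finite T" and "general_position T"
    and "oriented_subnetwork T N"
    and "ti \<in> T" "ti' \<in> T" "tj \<in> T" "tj' \<in> T"
    and "ti' = (a, c)" "ti = (b, d)" "tj' = (e, g)" "tj = (f, h)"
    and "a < b" "c < d" "e < f" "g < h"
    and "e \<le> a" "b \<le> f" "c \<le> g" "h \<le> d"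
    and "manhattan_path N ti ti'" "manhattan_path N ti' ti"
    and "manhattan_path N tj tj'" "manhattan_path N tj' tj"
  shows "manhattan_path N ti tj' \<and> manhattan_path N tj' ti \<and>
         manhattan_path N tj ti' \<and> manhattan_path N ti' tj"
proof -
  have weak: "a \<le> b" "c \<le> d" "g \<le> h" using assms by simp_all
  have down: "manhattan_path N ti tj' \<and> manhattan_path N tj ti'"
    using crossing_descending_paths[of T N ti tj ti' a c b d tj' e g f h] weak assms by blast
  \<comment> \<open>The upward paths are the downward paths of the converse network.\<close>
  have "manhattan_path (converse N) ti tj' \<and> manhattan_path (converse N) tj ti'"
    using crossing_descending_paths[of T "converse N" ti tj ti' a c b d tj' e g f h]
      weak oriented_subnetwork_converse manhattan_path_converse assms by blast
  then have up: "manhattan_path N tj' ti \<and> manhattan_path N ti' tj"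
    by (simp add: manhattan_path_converse)
  show ?thesis using down up by blast
qed

end
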